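(* Let $\alpha>0$ and let $a_1,\dots,a_N,b_1,\dots,b_{N-1}$ be independent with $a_i\sim\mathcal N(0,\alpha)$, $b_i\ge0$, $b_i^2\sim\frac\alpha2\chi^2(2i/\alpha)$; let $c_i=(b_i^2-i)/\sqrt i$. Let $\theta_N=1+N^{-2/3}w_N$ with $w_N>0$, $(\log\log N)^2/w_N\to0$ and $w_N/(\log N)^2\to0$. For $1\le i\le N$ let $r_i=1+\sqrt{1-\frac{i-1}{N\theta_N^2}}$, $m_i=1-\sqrt{1-\frac{i-1}{N\theta_N^2}}$, $\gamma_i=m_i/r_i$; for $3\le i\le N$ let $\xi_i=\frac{a_i}{\sqrt N\theta_Nr_i}+\sqrt{\frac{m_i}{r_i}}\frac{c_{i-1}}{\sqrt N\theta_Nr_{i-1}}$, and let $L_2=0$, $L_i=\xi_i+\gamma_iL_{i-1}$. Then \[ \max_{3\le i\le N}|L_i|=o_{\mathbf P}(N^{-1/3}). \]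
   Context: For $d>0$, $\chi^2(d)$ has density $\frac{1}{2^{d/2}\Gamma(d/2)}x^{d/2-1}e^{-x/2}\mathbf 1_{x>0}$. $X_N=o_{\mathbf P}(c_N)$ means $X_N/c_N\to0$ in probability. *)

theory Defs
  imports "HOL-Probability.Probability"
begin

definition chi2_density :: "real \<Rightarrow> real \<Rightarrow> real" where
  "chi2_density d x = (if x > 0 then
      1 / (2 powr (d/2) * Gamma (d/2)) * x powr (d/2 - 1) * exp (-x/2) else 0)"

definition o_P :: "'a measure \<Rightarrow> (nat \<Rightarrow> 'a \<Rightarrow> real) \<Rightarrow> (nat \<Rightarrow> real) \<Rightarrow> bool" where
  "o_P M X c \<longleftrightarrow> (\<forall>\<epsilon>>0. ((\<lambda>N. measure M {x \<in> space M. \<bar>X N x / c N\<bar> > \<epsilon>}) \<longlongrightarrow> 0) sequentially)"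

definition theta :: "(nat \<Rightarrow> real) \<Rightarrow> nat \<Rightarrow> real" where
  "theta w N = 1 + real N powr (-2/3) * w N"

definition rr :: "real \<Rightarrow> nat \<Rightarrow> nat \<Rightarrow> real" where
  "rr \<theta> N i = 1 + sqrt (1 - (real i - 1) / (real N * \<theta>\<^sup>2))"

definition mm :: "real \<Rightarrow> nat \<Rightarrow> nat \<Rightarrow> real" where
  "mm \<theta> N i = 1 - sqrt (1 - (real i - 1) / (real N * \<theta>\<^sup>2))"

definition gam :: "real \<Rightarrow> nat \<Rightarrow> nat \<Rightarrow> real" where
  "gam \<theta> N i = mm \<theta> N i / rr \<theta> N i"

definition cc :: "(nat \<Rightarrow> real) \<Rightarrow> nat \<Rightarrow> real" where
  "cc b i = ((b i)\<^sup>2 - real i) / sqrt (real i)"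

definition xi :: "real \<Rightarrow> nat \<Rightarrow> (nat \<Rightarrow> real) \<Rightarrow> (nat \<Rightarrow> real) \<Rightarrow> nat \<Rightarrow> real" where
  "xi \<theta> N a b i = a i / (sqrt (real N) * \<theta> * rr \<theta> N i)
     + sqrt (mm \<theta> N i / rr \<theta> N i) * cc b (i - 1) / (sqrt (real N) * \<theta> * rr \<theta> N (i - 1))"

(* L_2 = 0, L_i = xi_i + gamma_i L_{i-1} for i \<ge> 3 (values for i < 2 are irrelevant, set to 0) *)
primrec LL :: "real \<Rightarrow> nat \<Rightarrow> (nat \<Rightarrow> real) \<Rightarrow> (nat \<Rightarrow> real) \<Rightarrow> nat \<Rightarrow> real" where
  "LL \<theta> N a b 0 = 0"
| "LL \<theta> N a b (Suc i) = (if Suc i \<le> 2 then 0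
     else xi \<theta> N a b (Suc i) + gam \<theta> N (Suc i) * LL \<theta> N a b i)"

end

theory Submission
  imports Defs "HOL-Real_Asymp.Real_Asymp"
begin

(*
  Unrolling the recursion gives L_i = \<Sum>_{k \<le> i} G(k, i) \<xi>_k with G(k, i) = \<gamma>_{k+1} \<cdots> \<gamma>_i, a weighted
  sum of the independent variables a_k and c_k. These are sub-exponential (Gaussian, resp.
  centred \<chi>\<^sup>2 with moment generating function \<le> exp (2 \<alpha> \<mu>\<^sup>2) for |\<mu>| \<alpha> \<le> 1/2), so a Chernoff
  bound gives P(|\<Sum> w_k \<xi>_k| \<ge> t) \<le> 2 exp (-t\<^sup>2 N / (16 \<alpha> S)) + 2 exp (-t \<surd>N / (4 \<alpha>)) whenever
  |w_k| \<le> 1 and \<Sum> w_k\<^sup>2 \<le> S.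

  With d_i = sqrt (1 - (i - 1) / (N \<theta>\<^sup>2)) we have \<gamma>_i \<le> 1 - d_i, hence \<Sum>_k G(k, i)\<^sup>2 \<le> 1 / d_i.
  For t = \<epsilon> N^(-1/3) / 2 a union bound over the bulk indices with d_i \<ge> \<eta> = (log N)\<^sup>2 / N^(1/3)
  therefore suffices. Near the edge we chain: L_i is compared with L_s at the next point s of
  the grid N, N - h, N - 2h, ... with h \<approx> N^(1/3) / (log N)^4. The increment L_s - L_i has
  weights with square sum \<le> 3 (s - i) \<le> 3 h, and there are only O((log N)^8) edge grid points,
  each controlled through d_N \<ge> sqrt (w_N / 2) N^(-1/3); the polylogarithmic count is beaten
  because (log log N)\<^sup>2 / w_N \<rightarrow> 0.
*)

section \<open>Moment generating functions of the entries\<close>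

lemma nn_integral_normal_density:
  "\<sigma> > 0 \<Longrightarrow> (\<integral>\<^sup>+y. ennreal (normal_density \<mu> \<sigma> y) \<partial>lborel) = 1"
  by (subst nn_integral_eq_integral) auto

lemma normal_density_mult_exp:
  assumes "\<sigma> > 0"
  shows "normal_density 0 \<sigma> y * exp (l * y) = exp (l\<^sup>2 * \<sigma>\<^sup>2 / 2) * normal_density (l * \<sigma>\<^sup>2) \<sigma> y"
proof -
  have "-(y - 0)\<^sup>2 / (2 * \<sigma>\<^sup>2) + l * y = l\<^sup>2 * \<sigma>\<^sup>2 / 2 + (-(y - l * \<sigma>\<^sup>2)\<^sup>2 / (2 * \<sigma>\<^sup>2))"
    using assms by (simp add: field_simps power2_eq_square)
  then show ?thesis
    unfolding normal_density_def by (simp add: exp_add[symmetric] mult_ac)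
qed

lemma normal_mgf:
  assumes X: "distributed M lborel X (\<lambda>x. ennreal (normal_density 0 \<sigma> x))" and "\<sigma> > 0"
  shows "(\<integral>\<^sup>+x. ennreal (exp (l * X x)) \<partial>M) = ennreal (exp (l\<^sup>2 * \<sigma>\<^sup>2 / 2))"
proof -
  have "(\<integral>\<^sup>+x. ennreal (exp (l * X x)) \<partial>M)
      = (\<integral>\<^sup>+y. ennreal (normal_density 0 \<sigma> y) * ennreal (exp (l * y)) \<partial>lborel)"
    by (rule distributed_nn_integral[OF X, symmetric]) simp
  also have "\<dots> = (\<integral>\<^sup>+y. ennreal (exp (l\<^sup>2 * \<sigma>\<^sup>2 / 2)) * ennreal (normal_density (l * \<sigma>\<^sup>2) \<sigma> y) \<partial>lborel)"
    using \<open>\<sigma> > 0\<close> by (intro nn_integral_cong) (simp add: normal_density_mult_exp flip: ennreal_mult)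
  also have "\<dots> = ennreal (exp (l\<^sup>2 * \<sigma>\<^sup>2 / 2))"
    using \<open>\<sigma> > 0\<close> by (simp add: nn_integral_cmult nn_integral_normal_density)
  finally show ?thesis .
qed

lemma nn_integral_powr_mult_exp:
  fixes k \<beta> :: real
  assumes "k > 0" "\<beta> > 0"
  shows "(\<integral>\<^sup>+y. ennreal (indicator {0..} y * y powr (k - 1) * exp (- (\<beta> * y))) \<partial>lborel)
       = ennreal (Gamma k / \<beta> powr k)"
proof -
  define I where "I = (\<integral>\<^sup>+y. ennreal (indicator {0..} y * y powr (k - 1) * exp (- (\<beta> * y))) \<partial>lborel)"
  define f where "f y = ennreal (indicator {0..} y * y powr (k - 1) / exp y)" for y :: real
  have [measurable]: "f \<in> borel_measurable borel"
    unfolding f_def by measurable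
  have f_scaled: "f (\<beta> * y) = ennreal (\<beta> powr (k - 1)) * ennreal (indicator {0..} y * y powr (k - 1) * exp (- (\<beta> * y)))"
    for y
    using \<open>\<beta> > 0\<close>
    by (cases "y \<ge> 0") (auto simp: f_def powr_mult exp_minus field_simps zero_le_mult_iff
        simp flip: ennreal_mult)
  have "ennreal (Gamma k) = (\<integral>\<^sup>+y. f y \<partial>lborel)"
    unfolding f_def by (rule Gamma_conv_nn_integral_real[OF \<open>k > 0\<close>])
  also have "\<dots> = \<beta> * (\<integral>\<^sup>+y. f (\<beta> * y) \<partial>lborel)"
    using nn_integral_real_affine[of f \<beta> 0] \<open>\<beta> > 0\<close> by simp
  also have "\<dots> = ennreal (\<beta> * \<beta> powr (k - 1)) * I"
    using \<open>\<beta> > 0\<close> unfolding f_scaled I_def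
    by (subst nn_integral_cmult) (auto simp: ennreal_mult mult.assoc)
  also have "\<beta> * \<beta> powr (k - 1) = \<beta> powr k"
    using \<open>\<beta> > 0\<close> by (simp add: powr_mult_base)
  finally have "ennreal (1 / \<beta> powr k) * ennreal (Gamma k) = I"
    using \<open>\<beta> > 0\<close> by (simp add: ennreal_mult'[symmetric] mult.assoc[symmetric])
  then show ?thesis
    using \<open>k > 0\<close> unfolding I_def by (simp add: ennreal_mult'[symmetric] less_imp_le)
qed

lemma chi2_density_nonneg: "d > 0 \<Longrightarrow> 0 \<le> chi2_density d x"
  by (simp add: chi2_density_def)

lemma chi2_mgf:
  assumes Y: "distributed M lborel Y (\<lambda>x. ennreal (chi2_density d x))" and "d > 0" and "s < 1/2"
  shows "(\<integral>\<^sup>+x. ennreal (exp (s * Y x)) \<partial>M) = ennreal ((1 - 2 * s) powr (- d / 2))"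
proof -
  define k where "k = d / 2"
  define \<beta> where "\<beta> = 1/2 - s"
  define C where "C = 1 / (2 powr k * Gamma k)"
  have "k > 0" "\<beta> > 0" "C > 0"
    using assms by (simp_all add: k_def \<beta>_def C_def Gamma_real_pos)
  have density: "chi2_density d y * exp (s * y) = C * (indicator {0..} y * y powr (k - 1) * exp (- (\<beta> * y)))"
    for y
    by (cases "y > 0") (auto simp: chi2_density_def C_def k_def \<beta>_def exp_add[symmetric] field_simps indicator_def)
  have "(\<integral>\<^sup>+x. ennreal (exp (s * Y x)) \<partial>M)
      = (\<integral>\<^sup>+y. ennreal (chi2_density d y) * ennreal (exp (s * y)) \<partial>lborel)"
    by (rule distributed_nn_integral[OF Y, symmetric]) simp
  also have "\<dots> = (\<integral>\<^sup>+y. ennreal C * ennreal (indicator {0..} y * y powr (k - 1) * exp (- (\<beta> * y))) \<partial>lborel)"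
    using \<open>d > 0\<close> \<open>C > 0\<close>
    by (intro nn_integral_cong) (simp add: chi2_density_nonneg density flip: ennreal_mult)
  also have "\<dots> = ennreal C * ennreal (Gamma k / \<beta> powr k)"
    using \<open>k > 0\<close> \<open>\<beta> > 0\<close> by (simp add: nn_integral_cmult nn_integral_powr_mult_exp)
  also have "\<dots> = ennreal (C * (Gamma k / \<beta> powr k))"
    using \<open>C > 0\<close> by (intro ennreal_mult'[symmetric]) simp
  also have "C * (Gamma k / \<beta> powr k) = 1 / (2 powr k * \<beta> powr k)"
    using \<open>k > 0\<close> by (simp add: C_def Gamma_real_pos[THEN less_imp_neq, symmetric])
  also have "\<dots> = (2 * \<beta>) powr (- k)"
    using \<open>\<beta> > 0\<close> by (simp add: powr_mult powr_minus divide_inverse)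
  also have "(2 * \<beta>) powr (- k) = (1 - 2 * s) powr (- d / 2)"
    by (simp add: k_def \<beta>_def algebra_simps)
  finally show ?thesis .
qed

lemma ln_one_minus_ge:
  fixes y :: real
  assumes "\<bar>y\<bar> \<le> 1/2"
  shows "- y - 2 * y\<^sup>2 \<le> ln (1 - y)"
proof (cases "y \<ge> 0")
  case True
  then show ?thesis using ln_one_minus_pos_lower_bound[of y] assms by auto
next
  case False
  then have "- y - y\<^sup>2 \<le> ln (1 - y)"
    using ln_one_plus_pos_lower_bound[of "-y"] assms by auto
  then show ?thesis by (smt (verit) zero_le_power2)
qed

lemma centered_chi2_mgf_le:
  fixes \<alpha> \<mu> :: real and j :: nat
  assumes B: "distributed M lborel (\<lambda>x. (2 / \<alpha>) * (B x)\<^sup>2) (\<lambda>x. ennreal (chi2_density (2 * real j / \<alpha>) x))"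
    and "\<alpha> > 0" "j \<ge> 1" "\<bar>\<mu>\<bar> * \<alpha> \<le> 1/2"
  shows "(\<integral>\<^sup>+x. ennreal (exp (\<mu> * (((B x)\<^sup>2 - real j) / sqrt (real j)))) \<partial>M) \<le> ennreal (exp (2 * \<alpha> * \<mu>\<^sup>2))"
proof -
  define r where "r = sqrt (real j)"
  define y where "y = \<mu> * \<alpha> / r"
  have "r \<ge> 1" "r * r = real j"
    using \<open>j \<ge> 1\<close> by (simp_all add: r_def)
  have "\<bar>y\<bar> \<le> \<bar>\<mu>\<bar> * \<alpha>"
    using \<open>r \<ge> 1\<close> \<open>\<alpha> > 0\<close> by (simp add: y_def abs_mult divide_le_eq mult_le_cancel_left1 mult_less_0_iff)
  then have y: "\<bar>y\<bar> \<le> 1/2"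
    using assms(4) by linarith
  have exponent: "\<mu> * (((B x)\<^sup>2 - real j) / sqrt (real j)) = (y / 2) * ((2 / \<alpha>) * (B x)\<^sup>2) + (- \<mu> * r)" for x
    using \<open>r * r = real j\<close> \<open>r \<ge> 1\<close> \<open>\<alpha> > 0\<close> by (simp add: y_def r_def[symmetric] field_simps)
  have "(\<integral>\<^sup>+x. ennreal (exp (\<mu> * (((B x)\<^sup>2 - real j) / sqrt (real j)))) \<partial>M)
      = (\<integral>\<^sup>+x. ennreal (exp ((y / 2) * ((2 / \<alpha>) * (B x)\<^sup>2))) * ennreal (exp (- \<mu> * r)) \<partial>M)"
    unfolding exponent exp_add by (simp add: ennreal_mult)
  also have "\<dots> = (\<integral>\<^sup>+x. ennreal (exp ((y / 2) * ((2 / \<alpha>) * (B x)\<^sup>2))) \<partial>M) * ennreal (exp (- \<mu> * r))"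
    by (intro nn_integral_multc measurable_compose[OF distributed_measurable[OF B]]) simp
  also have "\<dots> = ennreal ((1 - y) powr (- real j / \<alpha>) * exp (- \<mu> * r))"
    using chi2_mgf[OF B, of "y / 2"] y \<open>\<alpha> > 0\<close> \<open>j \<ge> 1\<close> by (simp add: ennreal_mult)
  also have "(1 - y) powr (- real j / \<alpha>) * exp (- \<mu> * r) = exp (- (real j / \<alpha>) * ln (1 - y) - \<mu> * r)"
    using y by (simp add: powr_def exp_add[symmetric])
  also have "\<dots> \<le> ennreal (exp (2 * \<alpha> * \<mu>\<^sup>2))"
  proof (intro ennreal_leI exp_mono)
    have "- ln (1 - y) \<le> y + 2 * y\<^sup>2"
      using ln_one_minus_ge[OF y] by linarith
    then have "- (real j / \<alpha>) * ln (1 - y) \<le> (real j / \<alpha>) * (y + 2 * y\<^sup>2)"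
      using mult_left_mono[of "- ln (1 - y)" _ "real j / \<alpha>"] \<open>\<alpha> > 0\<close> by simp
    also have "\<dots> = \<mu> * r + 2 * \<alpha> * \<mu>\<^sup>2"
      using \<open>r * r = real j\<close> \<open>r \<ge> 1\<close> \<open>\<alpha> > 0\<close> \<open>j \<ge> 1\<close>
      by (simp add: y_def field_simps power2_eq_square)
    finally show "- (real j / \<alpha>) * ln (1 - y) - \<mu> * r \<le> 2 * \<alpha> * \<mu>\<^sup>2"
      by simp
  qed
  finally show ?thesis .
qed

section \<open>Chernoff bounds\<close>

lemma (in prob_space) indep_sum_Chernoff_bound:
  fixes X :: "'i \<Rightarrow> 'a \<Rightarrow> real"
  assumes I: "finite I" and indep: "indep_vars (\<lambda>_. borel) X I" and "l > 0"
    and mgf: "\<And>j. j \<in> I \<Longrightarrow> (\<integral>\<^sup>+x. ennreal (exp (l * X j x)) \<partial>M) \<le> ennreal (exp (l\<^sup>2 * v j))"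
  shows "prob {x \<in> space M. (\<Sum>j\<in>I. X j x) \<ge> t} \<le> exp (- l * t + l\<^sup>2 * (\<Sum>j\<in>I. v j))"
proof -
  have [measurable]: "j \<in> I \<Longrightarrow> X j \<in> borel_measurable M" for j
    using indep by (auto simp: indep_vars_def)
  have "emeasure M {x \<in> space M. (\<Sum>j\<in>I. X j x) \<ge> t}
      \<le> ennreal (exp (- l * t)) * (\<integral>\<^sup>+x\<in>space M. exp (l * (\<Sum>j\<in>I. X j x)) \<partial>M)"
    using \<open>l > 0\<close> by (intro Chernoff_ineq_nn_integral_ge) auto
  also have "(\<integral>\<^sup>+x\<in>space M. exp (l * (\<Sum>j\<in>I. X j x)) \<partial>M) = (\<integral>\<^sup>+x. (\<Prod>j\<in>I. ennreal (exp (l * X j x))) \<partial>M)"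
    by (intro nn_integral_cong) (simp add: sum_distrib_left exp_sum I prod_ennreal)
  also have "\<dots> = (\<Prod>j\<in>I. \<integral>\<^sup>+x. ennreal (exp (l * X j x)) \<partial>M)"
    by (intro indep_vars_nn_integral I indep_vars_compose2[OF indep]) auto
  also have "ennreal (exp (- l * t)) * \<dots> \<le> ennreal (exp (- l * t)) * (\<Prod>j\<in>I. ennreal (exp (l\<^sup>2 * v j)))"
    by (intro mult_left_mono prod_mono_ennreal mgf) auto
  also have "\<dots> = ennreal (exp (- l * t) * (\<Prod>j\<in>I. exp (l\<^sup>2 * v j)))"
    by (simp add: prod_ennreal prod_nonneg flip: ennreal_mult)
  also have "exp (- l * t) * (\<Prod>j\<in>I. exp (l\<^sup>2 * v j)) = exp (- l * t + l\<^sup>2 * (\<Sum>j\<in>I. v j))"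
    by (simp add: exp_sum[OF I, symmetric] sum_distrib_left exp_add[symmetric])
  finally show ?thesis
    by (simp add: emeasure_eq_measure)
qed

lemma exp_quadratic_min_le:
  fixes V L t :: real
  assumes "V > 0" "L > 0" "t > 0"
  defines "l \<equiv> min (t / (2 * V)) L"
  shows "exp (- l * t + l\<^sup>2 * V) \<le> exp (- t\<^sup>2 / (4 * V)) + exp (- t * L / 2)"
proof -
  have "l > 0" "l * V \<le> t / 2"
    using assms by (auto simp: l_def min_def field_simps)
  then have "l * (l * V) \<le> l * (t / 2)"
    by (intro mult_left_mono) auto
  then have "- l * t + l\<^sup>2 * V \<le> - t * l / 2"
    by (simp add: power2_eq_square algebra_simps)
  also have "\<dots> = max (- t\<^sup>2 / (4 * V)) (- t * L / 2)"
    using assms by (auto simp: l_def min_def max_def power2_eq_square field_simps)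
  finally have "exp (- l * t + l\<^sup>2 * V) \<le> exp (max (- t\<^sup>2 / (4 * V)) (- t * L / 2))"
    by simp
  also have "\<dots> \<le> exp (- t\<^sup>2 / (4 * V)) + exp (- t * L / 2)"
    by (simp add: max_def add_increasing add_increasing2)
  finally show ?thesis .
qed

definition subexp_tail :: "real \<Rightarrow> real \<Rightarrow> real \<Rightarrow> real" where
  "subexp_tail V L t = 2 * exp (- t\<^sup>2 / (4 * V)) + 2 * exp (- t * L / 2)"

lemma subexp_tail_nonneg: "0 \<le> subexp_tail V L t"
  by (simp add: subexp_tail_def)

lemma subexp_tail_mono:
  assumes "0 < V" "V \<le> V'"
  shows "subexp_tail V L t \<le> subexp_tail V' L t"
proof -
  have "t\<^sup>2 / (4 * V') \<le> t\<^sup>2 / (4 * V)"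
    using assms by (intro divide_left_mono) auto
  then show ?thesis
    by (simp add: subexp_tail_def)
qed

lemma (in prob_space) abs_tail_le_subexp_tail:
  assumes [measurable]: "Z \<in> borel_measurable M" and "V > 0" "L > 0" "t > 0"
    and upper: "\<And>l. 0 < l \<Longrightarrow> l \<le> L \<Longrightarrow> prob {x \<in> space M. Z x \<ge> t} \<le> exp (- l * t + l\<^sup>2 * V)"
    and lower: "\<And>l. 0 < l \<Longrightarrow> l \<le> L \<Longrightarrow> prob {x \<in> space M. - Z x \<ge> t} \<le> exp (- l * t + l\<^sup>2 * V)"
  shows "prob {x \<in> space M. \<bar>Z x\<bar> \<ge> t} \<le> subexp_tail V L t"
proof -
  define l where "l = min (t / (2 * V)) L"
  have l: "0 < l" "l \<le> L"
    using assms by (auto simp: l_def)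
  have "{x \<in> space M. \<bar>Z x\<bar> \<ge> t} = {x \<in> space M. Z x \<ge> t} \<union> {x \<in> space M. - Z x \<ge> t}"
    by auto
  then have "prob {x \<in> space M. \<bar>Z x\<bar> \<ge> t} \<le> prob {x \<in> space M. Z x \<ge> t} + prob {x \<in> space M. - Z x \<ge> t}"
    by (auto intro: measure_Un_le)
  also have "\<dots> \<le> 2 * exp (- l * t + l\<^sup>2 * V)"
    using upper[OF l] lower[OF l] by simp
  also have "\<dots> \<le> subexp_tail V L t"
    using exp_quadratic_min_le[OF \<open>V > 0\<close> \<open>L > 0\<close> \<open>t > 0\<close>] by (simp add: l_def subexp_tail_def)
  finally show ?thesis .
qed

lemma (in finite_measure) measure_UN_le_card_mult:
  assumes "finite I" "\<And>i. i \<in> I \<Longrightarrow> F i \<in> sets M" "\<And>i. i \<in> I \<Longrightarrow> measure M (F i) \<le> c"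
    and "real (card I) \<le> K" "c \<ge> 0"
  shows "measure M (\<Union>i\<in>I. F i) \<le> K * c"
proof -
  have "measure M (\<Union>i\<in>I. F i) \<le> (\<Sum>i\<in>I. measure M (F i))"
    using assms by (intro measure_UNION_le) auto
  also have "\<dots> \<le> real (card I) * c"
    using sum_mono[of I "\<lambda>i. measure M (F i)" "\<lambda>_. c"] assms by simp
  also have "\<dots> \<le> K * c"
    using assms by (intro mult_right_mono) auto
  finally show ?thesis .
qed

section \<open>The coefficients of the recursion\<close>

definition dd :: "real \<Rightarrow> nat \<Rightarrow> nat \<Rightarrow> real" where
  "dd \<theta> N i = sqrt (1 - (real i - 1) / (real N * \<theta>\<^sup>2))"

lemma rr_eq_dd: "rr \<theta> N i = 1 + dd \<theta> N i"
  and mm_eq_dd: "mm \<theta> N i = 1 - dd \<theta> N i"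
  by (simp_all add: rr_def mm_def dd_def)

lemma dd_bounds:
  assumes "\<theta> \<ge> 1" "1 \<le> i" "i \<le> N"
  shows "0 < dd \<theta> N i" "dd \<theta> N i \<le> 1"
proof -
  have "real N \<le> real N * \<theta>\<^sup>2"
    using assms by (simp add: one_le_power mult_le_cancel_left1)
  then have "real i - 1 < real N * \<theta>\<^sup>2"
    using assms by linarith
  then have "(real i - 1) / (real N * \<theta>\<^sup>2) < 1" "0 \<le> (real i - 1) / (real N * \<theta>\<^sup>2)"
    using assms by (simp_all add: divide_less_eq)
  then show "0 < dd \<theta> N i" "dd \<theta> N i \<le> 1"
    by (simp_all add: dd_def)
qed

lemma dd_antimono: "i \<le> j \<Longrightarrow> dd \<theta> N j \<le> dd \<theta> N i"
  unfolding dd_def by (intro real_sqrt_le_mono diff_left_mono divide_right_mono) auto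

lemma gam_bounds:
  assumes "\<theta> \<ge> 1" "1 \<le> i" "i \<le> N"
  shows "0 \<le> gam \<theta> N i" "gam \<theta> N i \<le> 1 - dd \<theta> N i" "gam \<theta> N i \<le> 1"
    and "1 - gam \<theta> N i \<le> 2 * dd \<theta> N i"
proof -
  define x where "x = dd \<theta> N i"
  have x: "0 < x" "x \<le> 1"
    using dd_bounds[OF assms] by (simp_all add: x_def)
  have gam: "gam \<theta> N i = (1 - x) / (1 + x)"
    by (simp add: gam_def rr_eq_dd mm_eq_dd x_def)
  show "0 \<le> gam \<theta> N i"
    using x by (simp add: gam)
  have "(1 - x) * 1 \<le> (1 - x) * (1 + x)"
    using x by (intro mult_left_mono) auto
  then show "gam \<theta> N i \<le> 1 - dd \<theta> N i"
    using x by (simp add: gam x_def[symmetric] divide_le_eq mult.commute)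
  then show "gam \<theta> N i \<le> 1"
    using x by (simp add: x_def)
  have "1 - (1 - x) / (1 + x) = 2 * x / (1 + x)"
    using x by (simp add: field_simps)
  also have "\<dots> \<le> 2 * x"
    using x by (simp add: divide_le_eq algebra_simps)
  finally show "1 - gam \<theta> N i \<le> 2 * dd \<theta> N i"
    by (simp add: gam x_def)
qed

lemma xi_coeff_bounds:
  assumes "\<theta> \<ge> 1" "2 \<le> i" "i \<le> N"
  shows "(1 / (sqrt (real N) * \<theta> * rr \<theta> N i))\<^sup>2 \<le> 1 / real N"
    and "(sqrt (mm \<theta> N i / rr \<theta> N i) / (sqrt (real N) * \<theta> * rr \<theta> N (i - 1)))\<^sup>2 \<le> 1 / real N"
proof -
  have gauss: "(1 / (sqrt (real N) * \<theta> * rr \<theta> N k))\<^sup>2 \<le> 1 / real N" if "1 \<le> k" "k \<le> N" for k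
  proof -
    have "1 \<le> rr \<theta> N k"
      using dd_bounds[OF \<open>\<theta> \<ge> 1\<close> that] by (simp add: rr_eq_dd)
    then have "1 \<le> \<theta>\<^sup>2 * (rr \<theta> N k)\<^sup>2"
      using \<open>\<theta> \<ge> 1\<close> by (metis mult_mono' one_le_power mult_1 zero_le_one)
    then have "real N \<le> (sqrt (real N) * \<theta> * rr \<theta> N k)\<^sup>2"
      by (simp add: power_mult_distrib mult.assoc mult_le_cancel_left1)
    then show ?thesis
      using that by (simp add: power_divide frac_le)
  qed
  show "(1 / (sqrt (real N) * \<theta> * rr \<theta> N i))\<^sup>2 \<le> 1 / real N"
    using assms by (intro gauss) auto
  have "0 \<le> mm \<theta> N i / rr \<theta> N i" "mm \<theta> N i / rr \<theta> N i \<le> 1"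
    using dd_bounds[OF \<open>\<theta> \<ge> 1\<close>, of i N] assms by (simp_all add: rr_eq_dd mm_eq_dd)
  then have "(sqrt (mm \<theta> N i / rr \<theta> N i) / (sqrt (real N) * \<theta> * rr \<theta> N (i - 1)))\<^sup>2
      = (mm \<theta> N i / rr \<theta> N i) * (1 / (sqrt (real N) * \<theta> * rr \<theta> N (i - 1)))\<^sup>2"
    by (simp add: power_divide)
  also have "\<dots> \<le> 1 * (1 / (sqrt (real N) * \<theta> * rr \<theta> N (i - 1)))\<^sup>2"
    using \<open>mm \<theta> N i / rr \<theta> N i \<le> 1\<close> by (intro mult_right_mono) auto
  also have "\<dots> \<le> 1 / real N"
    using assms by (simp add: gauss)
  finally show "(sqrt (mm \<theta> N i / rr \<theta> N i) / (sqrt (real N) * \<theta> * rr \<theta> N (i - 1)))\<^sup>2 \<le> 1 / real N" .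
qed

lemma N_minus_lt_of_dd_lt:
  assumes "\<theta> \<ge> 1" "1 \<le> i" "i \<le> N" "dd \<theta> N i < \<eta>"
  shows "real (N - i) < real N * \<theta>\<^sup>2 * \<eta>\<^sup>2"
proof -
  define D where "D = real N * \<theta>\<^sup>2"
  have "real N \<le> D" "D > 0"
    using assms by (simp_all add: D_def mult_le_cancel_left1)
  have "1 - (real i - 1) / D = (dd \<theta> N i)\<^sup>2"
    using dd_bounds[OF assms(1-3)] by (simp add: dd_def D_def)
  also have "\<dots> < \<eta>\<^sup>2"
    using dd_bounds[OF assms(1-3)] assms(4) by (intro power_strict_mono) auto
  finally have "D - (real i - 1) < D * \<eta>\<^sup>2"
    using \<open>D > 0\<close> by (simp add: field_simps)
  then have "real N - real i < D * \<eta>\<^sup>2"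
    using \<open>real N \<le> D\<close> by linarith
  then show ?thesis
    using assms(3) by (simp add: D_def)
qed

lemma dd_last_ge:
  assumes "0 < v" "v \<le> 1" "N \<ge> 1"
  shows "sqrt (v / 2) \<le> dd (1 + v) N N"
proof -
  have "(real N - 1) / (real N * (1 + v)\<^sup>2) \<le> 1 / (1 + v)\<^sup>2"
    using assms by (simp add: divide_le_eq field_simps)
  also have "\<dots> \<le> 1 - v / 2"
  proof -
    have "1 \<le> (1 - v / 2) * (1 + v)\<^sup>2"
      using assms by (simp add: power2_eq_square algebra_simps) (smt (verit) mult_left_le mult_nonneg_nonneg)
    then show ?thesis
      using assms by (simp add: divide_le_eq)
  qed
  finally have "v / 2 \<le> 1 - (real N - 1) / (real N * (1 + v)\<^sup>2)"
    by linarith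
  then show ?thesis
    unfolding dd_def by (rule real_sqrt_le_mono)
qed

section \<open>Unrolling the recursion\<close>

definition gam_prod :: "real \<Rightarrow> nat \<Rightarrow> nat \<Rightarrow> nat \<Rightarrow> real" where
  "gam_prod \<theta> N k i = (\<Prod>l\<in>{k<..i}. gam \<theta> N l)"

lemma gam_prod_self [simp]: "gam_prod \<theta> N i i = 1"
  by (simp add: gam_prod_def)

lemma gam_prod_Suc:
  assumes "k \<le> i"
  shows "gam_prod \<theta> N k (Suc i) = gam \<theta> N (Suc i) * gam_prod \<theta> N k i"
proof -
  have "{k<..Suc i} = insert (Suc i) {k<..i}"
    using assms by auto
  then show ?thesis
    by (simp add: gam_prod_def)
qed

lemma gam_prod_trans:
  assumes "k \<le> i" "i \<le> s"
  shows "gam_prod \<theta> N k s = gam_prod \<theta> N k i * gam_prod \<theta> N i s"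
proof -
  have "{k<..s} = {k<..i} \<union> {i<..s}" "{k<..i} \<inter> {i<..s} = {}"
    using assms by auto
  then show ?thesis
    by (simp add: gam_prod_def prod.union_disjoint)
qed

lemma gam_prod_bounds:
  assumes "\<theta> \<ge> 1" "i \<le> N"
  shows "0 \<le> gam_prod \<theta> N k i" "gam_prod \<theta> N k i \<le> 1"
  using gam_bounds[OF \<open>\<theta> \<ge> 1\<close>] assms
  by (auto simp: gam_prod_def intro!: prod_nonneg prod_le_1)

lemma LL_eq_sum_gam_prod: "LL \<theta> N a b i = (\<Sum>k\<in>{3..i}. gam_prod \<theta> N k i * xi \<theta> N a b k)"
proof (induction i)
  case (Suc i)
  show ?case
  proof (cases "Suc i \<le> 2")
    case False
    then have "{3..Suc i} = insert (Suc i) {3..i}"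
      by auto
    then show ?thesis
      using False by (simp add: Suc.IH sum_distrib_left gam_prod_Suc mult.assoc)
  qed simp
qed simp

lemma sum_if_le_eq:
  fixes i N m :: nat
  assumes "i \<le> N"
  shows "(\<Sum>k\<in>{m..N}. if k \<le> i then f k else 0) = (\<Sum>k\<in>{m..i}. f k)"
proof -
  have "{k \<in> {m..N}. k \<le> i} = {m..i}"
    using assms by auto
  then show ?thesis
    by (simp add: sum.inter_filter[symmetric])
qed

(* Induction: the sum for i + 1 is 1 + \<gamma>_(i+1)\<^sup>2 times the sum for i, and \<gamma>_(i+1) \<le> 1 - D with
   1 + (1 - D)\<^sup>2 / D \<le> 1 / D for D = d_(i+1) \<le> d_i. *)
lemma gam_prod_sq_sum_le:
  assumes "\<theta> \<ge> 1"
  shows "2 \<le> i \<Longrightarrow> i \<le> N \<Longrightarrow> (\<Sum>k\<in>{3..i}. (gam_prod \<theta> N k i)\<^sup>2) \<le> 1 / dd \<theta> N i"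
proof (induction i)
  case (Suc i)
  define D where "D = dd \<theta> N (Suc i)"
  have D: "0 < D" "D \<le> 1"
    using dd_bounds[OF assms, of "Suc i" N] Suc.prems by (simp_all add: D_def)
  show ?case
  proof (cases "Suc i = 2")
    case False
    then have i: "2 \<le> i" "i \<le> N"
      using Suc.prems by auto
    have "1 / dd \<theta> N i \<le> 1 / D"
      using dd_antimono[of i "Suc i" \<theta> N] D by (intro divide_left_mono) (auto simp: D_def)
    then have "(\<Sum>k\<in>{3..i}. (gam_prod \<theta> N k i)\<^sup>2) \<le> 1 / D"
      using Suc.IH[OF i] by linarith
    moreover have "(gam \<theta> N (Suc i))\<^sup>2 \<le> (1 - D)\<^sup>2"
      using gam_bounds[OF assms, of "Suc i" N] Suc.prems by (intro power_mono) (auto simp: D_def)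
    ultimately have "(gam \<theta> N (Suc i))\<^sup>2 * (\<Sum>k\<in>{3..i}. (gam_prod \<theta> N k i)\<^sup>2) \<le> (1 - D)\<^sup>2 * (1 / D)"
      by (intro mult_mono) (auto intro: sum_nonneg)
    moreover have "{3..Suc i} = insert (Suc i) {3..i}"
      using False Suc.prems by auto
    ultimately have "(\<Sum>k\<in>{3..Suc i}. (gam_prod \<theta> N k (Suc i))\<^sup>2) \<le> 1 + (1 - D)\<^sup>2 * (1 / D)"
      by (simp add: gam_prod_Suc power_mult_distrib sum_distrib_left)
    also have "\<dots> \<le> 1 / D"
      using D by (simp add: field_simps power2_eq_square mult_le_cancel_left1)
    finally show ?thesis
      by (simp add: D_def)
  qed (use D in \<open>simp add: D_def\<close>)
qed simp

definition LL_weight :: "real \<Rightarrow> nat \<Rightarrow> nat \<Rightarrow> nat \<Rightarrow> real" where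
  "LL_weight \<theta> N i k = (if k \<le> i then gam_prod \<theta> N k i else 0)"

lemma LL_weight_bounds:
  assumes "\<theta> \<ge> 1" "i \<le> N"
  shows "0 \<le> LL_weight \<theta> N i k" "LL_weight \<theta> N i k \<le> 1"
  using gam_prod_bounds[OF assms] by (simp_all add: LL_weight_def)

lemma LL_weight_sq_sum_le:
  assumes "\<theta> \<ge> 1" "2 \<le> i" "i \<le> N"
  shows "(\<Sum>k\<in>{3..N}. (LL_weight \<theta> N i k)\<^sup>2) \<le> 1 / dd \<theta> N i"
  using gam_prod_sq_sum_le[OF assms] sum_if_le_eq[OF \<open>i \<le> N\<close>, where m = 3 and f = "\<lambda>k. (gam_prod \<theta> N k i)\<^sup>2"]
  by (simp add: LL_weight_def if_distrib[of "\<lambda>x. x\<^sup>2"] cong: if_cong)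

lemma one_minus_gam_prod_le:
  assumes "\<theta> \<ge> 1" "1 \<le> i" "i \<le> s" "s \<le> N"
  shows "1 - gam_prod \<theta> N i s \<le> 2 * real (s - i) * dd \<theta> N i"
proof -
  have l: "1 \<le> l" "l \<le> N" if "l \<in> {i<..s}" for l
    using that assms by auto
  have "1 - (\<Sum>l\<in>{i<..s}. 1 - gam \<theta> N l) \<le> (\<Prod>l\<in>{i<..s}. 1 - (1 - gam \<theta> N l))"
    using gam_bounds[OF assms(1) l] by (intro Weierstrass_prod_ineq) auto
  moreover have "(\<Sum>l\<in>{i<..s}. 1 - gam \<theta> N l) \<le> (\<Sum>l\<in>{i<..s}. 2 * dd \<theta> N i)"
  proof (intro sum_mono)
    fix l assume "l \<in> {i<..s}"
    then have "1 - gam \<theta> N l \<le> 2 * dd \<theta> N l" "dd \<theta> N l \<le> dd \<theta> N i"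
      using gam_bounds(4)[OF assms(1) l] dd_antimono[of i l] by auto
    then show "1 - gam \<theta> N l \<le> 2 * dd \<theta> N i"
      by linarith
  qed
  ultimately show ?thesis
    by (simp add: gam_prod_def)
qed

lemma gam_prod_defect_sq_sum_le:
  assumes "\<theta> \<ge> 1" "3 \<le> i" "i \<le> s" "s \<le> N"
  shows "(1 - gam_prod \<theta> N i s)\<^sup>2 * (\<Sum>k\<in>{3..i}. (gam_prod \<theta> N k i)\<^sup>2) \<le> 2 * real (s - i)"
proof -
  define G where "G = gam_prod \<theta> N i s"
  define D where "D = dd \<theta> N i"
  have "0 < D" "0 \<le> 1 - G" "1 - G \<le> 1"
    using dd_bounds[OF assms(1), of i N] gam_prod_bounds[OF assms(1), of s N i] assms
    by (simp_all add: D_def G_def)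
  have "(1 - G)\<^sup>2 * (\<Sum>k\<in>{3..i}. (gam_prod \<theta> N k i)\<^sup>2) \<le> (1 - G)\<^sup>2 * (1 / D)"
    using gam_prod_sq_sum_le[OF assms(1), of i N] assms by (intro mult_left_mono) (auto simp: D_def)
  also have "\<dots> \<le> (1 - G) * (1 / D)"
    using \<open>0 < D\<close> \<open>0 \<le> 1 - G\<close> \<open>1 - G \<le> 1\<close>
    by (intro mult_right_mono) (simp_all add: power2_eq_square mult_left_le)
  also have "\<dots> \<le> 2 * real (s - i)"
    using one_minus_gam_prod_le[OF assms(1) _ assms(3,4)] assms \<open>0 < D\<close>
    by (simp add: G_def D_def pos_divide_le_eq)
  finally show ?thesis
    by (simp add: G_def)
qed

(* Below i the two weight vectors differ by the factor 1 - gam_prod i s; on (i, s] only the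
   first one is nonzero, and it is bounded by 1. *)
lemma LL_weight_diff_sq_sum_le:
  assumes "\<theta> \<ge> 1" "3 \<le> i" "i \<le> s" "s \<le> N"
  shows "(\<Sum>k\<in>{3..N}. (LL_weight \<theta> N s k - LL_weight \<theta> N i k)\<^sup>2) \<le> 3 * real (s - i)"
proof -
  define G where "G = gam_prod \<theta> N i s"
  have split: "(LL_weight \<theta> N s k - LL_weight \<theta> N i k)\<^sup>2
      = (if k \<le> i then (1 - G)\<^sup>2 * (gam_prod \<theta> N k i)\<^sup>2 else 0)
        + (if i < k \<and> k \<le> s then (gam_prod \<theta> N k s)\<^sup>2 else 0)" for k
  proof (cases "k \<le> i")
    case True
    then have "LL_weight \<theta> N s k - LL_weight \<theta> N i k = (G - 1) * gam_prod \<theta> N k i"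
      using gam_prod_trans[of k i s \<theta> N] assms by (simp add: LL_weight_def G_def algebra_simps)
    then show ?thesis
      using True by (simp add: power_mult_distrib power2_commute)
  qed (simp add: LL_weight_def)
  have head: "(\<Sum>k\<in>{3..N}. if k \<le> i then (1 - G)\<^sup>2 * (gam_prod \<theta> N k i)\<^sup>2 else 0) \<le> 2 * real (s - i)"
    using gam_prod_defect_sq_sum_le[OF assms] assms by (simp add: sum_if_le_eq sum_distrib_left G_def)
  have "{k \<in> {3..N}. i < k \<and> k \<le> s} = {i<..s}"
    using assms by auto
  then have "(\<Sum>k\<in>{3..N}. if i < k \<and> k \<le> s then (gam_prod \<theta> N k s)\<^sup>2 else 0)
      = (\<Sum>k\<in>{i<..s}. (gam_prod \<theta> N k s)\<^sup>2)"
    by (simp add: sum.inter_filter[symmetric])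
  also have "\<dots> \<le> (\<Sum>k\<in>{i<..s}. 1)"
    using gam_prod_bounds[OF assms(1), of s N] assms by (intro sum_mono) (simp add: power_le_one)
  finally have tail: "(\<Sum>k\<in>{3..N}. if i < k \<and> k \<le> s then (gam_prod \<theta> N k s)\<^sup>2 else 0) \<le> real (s - i)"
    by simp
  show ?thesis
    unfolding split sum.distrib using head tail by linarith
qed

definition xi_sum :: "real \<Rightarrow> nat \<Rightarrow> (nat \<Rightarrow> real) \<Rightarrow> (nat \<Rightarrow> real) \<Rightarrow> (nat \<Rightarrow> real) \<Rightarrow> real" where
  "xi_sum \<theta> N w av bv = (\<Sum>k\<in>{3..N}. w k * xi \<theta> N av bv k)"

lemma xi_sum_uminus: "xi_sum \<theta> N (\<lambda>k. - w k) av bv = - xi_sum \<theta> N w av bv"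
  by (simp add: xi_sum_def sum_negf)

lemma xi_sum_diff: "xi_sum \<theta> N (\<lambda>k. w k - w' k) av bv = xi_sum \<theta> N w av bv - xi_sum \<theta> N w' av bv"
  by (simp add: xi_sum_def sum_subtractf left_diff_distrib)

lemma LL_eq_xi_sum: "i \<le> N \<Longrightarrow> LL \<theta> N av bv i = xi_sum \<theta> N (LL_weight \<theta> N i) av bv"
  by (simp add: xi_sum_def LL_weight_def LL_eq_sum_gam_prod if_distrib[of "\<lambda>c. c * _"] sum_if_le_eq
      cong: if_cong)

(* Inl k indexes a_k and Inr k indexes c_k; the latter enters through \<xi>_(k+1). *)
definition xi_sum_coeff :: "real \<Rightarrow> nat \<Rightarrow> (nat \<Rightarrow> real) \<Rightarrow> nat + nat \<Rightarrow> real" where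
  "xi_sum_coeff \<theta> N w j = (case j of
      Inl k \<Rightarrow> w k * (1 / (sqrt (real N) * \<theta> * rr \<theta> N k))
    | Inr k \<Rightarrow> w (Suc k) * (sqrt (mm \<theta> N (Suc k) / rr \<theta> N (Suc k)) / (sqrt (real N) * \<theta> * rr \<theta> N k)))"

lemma xi_sum_coeff_sq_le:
  assumes "\<theta> \<ge> 1" "j \<in> {3..N} <+> {2..N-1}"
  shows "(xi_sum_coeff \<theta> N w j)\<^sup>2 \<le> (case j of Inl k \<Rightarrow> w k | Inr k \<Rightarrow> w (Suc k))\<^sup>2 * (1 / real N)"
proof (cases j)
  case (Inl k)
  then have "(1 / (sqrt (real N) * \<theta> * rr \<theta> N k))\<^sup>2 \<le> 1 / real N"
    using xi_coeff_bounds(1)[OF assms(1)] assms(2) by auto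
  then show ?thesis
    using Inl by (simp only: xi_sum_coeff_def sum.case power_mult_distrib mult_left_mono zero_le_power2)
next
  case (Inr k)
  then have "(sqrt (mm \<theta> N (Suc k) / rr \<theta> N (Suc k)) / (sqrt (real N) * \<theta> * rr \<theta> N k))\<^sup>2 \<le> 1 / real N"
    using xi_coeff_bounds(2)[OF assms(1), of "Suc k" N] assms(2) by auto
  then show ?thesis
    using Inr by (simp only: xi_sum_coeff_def sum.case power_mult_distrib mult_left_mono zero_le_power2)
qed

lemma xi_sum_coeff_abs_le:
  assumes "\<theta> \<ge> 1" "j \<in> {3..N} <+> {2..N-1}" "\<And>k. k \<in> {3..N} \<Longrightarrow> \<bar>w k\<bar> \<le> 1"
  shows "\<bar>xi_sum_coeff \<theta> N w j\<bar> \<le> 1 / sqrt (real N)"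
proof -
  have "\<bar>case j of Inl k \<Rightarrow> w k | Inr k \<Rightarrow> w (Suc k)\<bar> \<le> 1"
    using assms(2,3) by auto
  then have "(case j of Inl k \<Rightarrow> w k | Inr k \<Rightarrow> w (Suc k))\<^sup>2 * (1 / real N) \<le> 1 * (1 / real N)"
    by (intro mult_right_mono) (simp_all add: abs_square_le_1)
  then have "sqrt ((xi_sum_coeff \<theta> N w j)\<^sup>2) \<le> sqrt (1 / real N)"
    using xi_sum_coeff_sq_le[OF assms(1,2), of w] by (intro real_sqrt_le_mono) linarith
  then show ?thesis
    by (simp add: real_sqrt_divide)
qed

lemma xi_sum_coeff_sq_sum_le:
  assumes "\<theta> \<ge> 1" "N \<ge> 3"
  shows "(\<Sum>j\<in>{3..N} <+> {2..N-1}. (xi_sum_coeff \<theta> N w j)\<^sup>2) \<le> 2 * (\<Sum>k\<in>{3..N}. (w k)\<^sup>2) / real N"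
proof -
  have "(\<Sum>j\<in>{3..N} <+> {2..N-1}. (xi_sum_coeff \<theta> N w j)\<^sup>2)
      \<le> (\<Sum>j\<in>{3..N} <+> {2..N-1}. (case j of Inl k \<Rightarrow> w k | Inr k \<Rightarrow> w (Suc k))\<^sup>2 * (1 / real N))"
    using xi_sum_coeff_sq_le[OF assms(1)] by (intro sum_mono)
  also have "\<dots> = 2 * (\<Sum>k\<in>{3..N}. (w k)\<^sup>2) / real N"
    using sum.shift_bounds_cl_Suc_ivl[of "\<lambda>k. (w k)\<^sup>2" 2 "N - 1"] assms(2)
    by (simp add: sum.Plus sum_divide_distrib[symmetric])
  finally show ?thesis .
qed

definition grid_up :: "nat \<Rightarrow> nat \<Rightarrow> nat \<Rightarrow> nat" where
  "grid_up N h i = N - h * ((N - i) div h)"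

lemma grid_up_bounds:
  assumes "h \<ge> 1" "i \<le> N"
  shows "i \<le> grid_up N h i" "grid_up N h i \<le> N" "grid_up N h i - i < h"
proof -
  have "h * ((N - i) div h) + (N - i) mod h = N - i" "(N - i) mod h < h"
    using assms by simp_all
  then show "i \<le> grid_up N h i" "grid_up N h i \<le> N" "grid_up N h i - i < h"
    unfolding grid_up_def using assms by linarith+
qed

lemma card_grid_up_image_le:
  fixes X :: real
  assumes "h \<ge> 1" "X \<ge> 0" "\<And>i. i \<in> T \<Longrightarrow> real (N - i) < X"
  shows "real (card (grid_up N h ` T)) \<le> X / real h + 1"
proof -
  have "grid_up N h ` T \<subseteq> (\<lambda>q. N - h * q) ` {..<nat \<lceil>X / real h\<rceil>}"
  proof (intro image_subsetI)
    fix i assume "i \<in> T"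
    have "real ((N - i) div h) \<le> real (N - i) / real h"
      by (rule of_nat_div_le_of_nat)
    also have "\<dots> < X / real h"
      using assms \<open>i \<in> T\<close> by (simp add: divide_strict_right_mono)
    finally have "(N - i) div h < nat \<lceil>X / real h\<rceil>"
      by linarith
    then show "grid_up N h i \<in> (\<lambda>q. N - h * q) ` {..<nat \<lceil>X / real h\<rceil>}"
      by (auto simp: grid_up_def)
  qed
  then have "card (grid_up N h ` T) \<le> nat \<lceil>X / real h\<rceil>"
    by (metis card_image_le card_lessThan finite_lessThan order.trans card_mono finite_imageI)
  then have "real (card (grid_up N h ` T)) \<le> real (nat \<lceil>X / real h\<rceil>)"
    by (rule of_nat_mono)
  also have "\<dots> = of_int \<lceil>X / real h\<rceil>"
    using assms by (intro of_nat_nat) (simp add: order.strict_trans2[of _ 0])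
  also have "\<dots> \<le> X / real h + 1"
    by linarith
  finally show ?thesis .
qed

section \<open>Tail bounds in the tridiagonal model\<close>

definition xi_tail :: "real \<Rightarrow> nat \<Rightarrow> real \<Rightarrow> real \<Rightarrow> real" where
  "xi_tail \<alpha> N S t = subexp_tail (4 * \<alpha> * S / real N) (sqrt (real N) / (2 * \<alpha>)) t"

lemma xi_tail_nonneg: "0 \<le> xi_tail \<alpha> N S t"
  by (simp add: xi_tail_def subexp_tail_nonneg)

lemma xi_tail_mono:
  assumes "\<alpha> > 0" "N > 0" "0 < S" "S \<le> S'"
  shows "xi_tail \<alpha> N S t \<le> xi_tail \<alpha> N S' t"
  using assms by (simp add: xi_tail_def subexp_tail_mono divide_right_mono)

(* One term each for the bulk indices, the edge grid points and the increments from the edge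
   indices to the grid. *)
definition chain_tail_bound :: "real \<Rightarrow> real \<Rightarrow> nat \<Rightarrow> real \<Rightarrow> real \<Rightarrow> nat \<Rightarrow> real" where
  "chain_tail_bound \<alpha> \<theta> N t \<eta> h =
     real N * xi_tail \<alpha> N (1 / \<eta>) t
     + (real N * \<theta>\<^sup>2 * \<eta>\<^sup>2 / real h + 1) * xi_tail \<alpha> N (1 / dd \<theta> N N) t
     + real N * xi_tail \<alpha> N (3 * real h) t"

locale tridiagonal_model = prob_space M for M :: "'s measure" +
  fixes \<alpha> :: real and N :: nat and a b :: "nat \<Rightarrow> 's \<Rightarrow> real"
  assumes alpha_pos: "\<alpha> > 0"
    and indep_entries: "indep_vars (\<lambda>_. borel) (\<lambda>j. case j of Inl i \<Rightarrow> a i | Inr i \<Rightarrow> b i)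
          (Inl ` {1..N} \<union> Inr ` {1..N-1})"
    and a_distr: "\<And>i. 1 \<le> i \<Longrightarrow> i \<le> N \<Longrightarrow>
          distributed M lborel (a i) (\<lambda>x. ennreal (normal_density 0 (sqrt \<alpha>) x))"
    and b_distr: "\<And>i. 1 \<le> i \<Longrightarrow> i \<le> N - 1 \<Longrightarrow>
          distributed M lborel (\<lambda>x. (2 / \<alpha>) * (b i x)\<^sup>2) (\<lambda>x. ennreal (chi2_density (2 * real i / \<alpha>) x))"
begin

definition normalized_entry :: "nat + nat \<Rightarrow> 's \<Rightarrow> real" where
  "normalized_entry j x = (case j of Inl i \<Rightarrow> a i x | Inr i \<Rightarrow> cc (\<lambda>i. b i x) i)"

lemma indep_normalized_entry: "indep_vars (\<lambda>_. borel) normalized_entry ({1..N} <+> {1..N-1})"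
proof -
  have "indep_vars (\<lambda>_. borel)
      (\<lambda>j x. (case j of Inl i \<Rightarrow> (\<lambda>y. y) | Inr i \<Rightarrow> (\<lambda>y. (y\<^sup>2 - real i) / sqrt (real i)))
               ((case j of Inl i \<Rightarrow> a i | Inr i \<Rightarrow> b i) x)) ({1..N} <+> {1..N-1})"
    using indep_entries unfolding Plus_def by (rule indep_vars_compose2) (auto split: sum.split)
  then show ?thesis
    by (rule indep_vars_cong[THEN iffD1, rotated 3])
       (auto simp: normalized_entry_def cc_def fun_eq_iff split: sum.split)
qed

lemma normalized_entry_measurable [measurable]: "j \<in> {1..N} <+> {1..N-1} \<Longrightarrow> normalized_entry j \<in> borel_measurable M"
  using indep_normalized_entry by (auto simp: indep_vars_def)

lemma normalized_entry_mgf_le: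
  assumes "j \<in> {1..N} <+> {1..N-1}" "\<bar>\<mu>\<bar> * \<alpha> \<le> 1/2"
  shows "(\<integral>\<^sup>+x. ennreal (exp (\<mu> * normalized_entry j x)) \<partial>M) \<le> ennreal (exp (\<mu>\<^sup>2 * (2 * \<alpha>)))"
proof (cases j)
  case (Inl i)
  then have "(\<integral>\<^sup>+x. ennreal (exp (\<mu> * normalized_entry j x)) \<partial>M) = ennreal (exp (\<mu>\<^sup>2 * (sqrt \<alpha>)\<^sup>2 / 2))"
    using assms normal_mgf[OF a_distr, of i \<mu>] alpha_pos by (auto simp: normalized_entry_def)
  also have "\<dots> \<le> ennreal (exp (\<mu>\<^sup>2 * (2 * \<alpha>)))"
    using alpha_pos by (intro ennreal_leI) simp
  finally show ?thesis .
next
  case (Inr i)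
  then show ?thesis
    using centered_chi2_mgf_le[OF b_distr alpha_pos _ assms(2), of i] assms
    by (auto simp: normalized_entry_def cc_def mult_ac)
qed

lemma xi_sum_eq_sum_normalized_entry:
  assumes "N \<ge> 3"
  shows "xi_sum \<theta> N w (\<lambda>i. a i x) (\<lambda>i. b i x) = (\<Sum>j\<in>{3..N} <+> {2..N-1}. xi_sum_coeff \<theta> N w j * normalized_entry j x)"
proof -
  have "{3..N} = {Suc 2..Suc (N - 1)}"
    using assms by auto
  then have "(\<Sum>k\<in>{2..N-1}. xi_sum_coeff \<theta> N w (Inr k) * normalized_entry (Inr k) x)
      = (\<Sum>k\<in>{3..N}. xi_sum_coeff \<theta> N w (Inr (k - 1)) * normalized_entry (Inr (k - 1)) x)"
    by (simp only: sum.shift_bounds_cl_Suc_ivl) simp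
  then show ?thesis
    by (simp add: sum.Plus xi_sum_def xi_def sum.distrib[symmetric] xi_sum_coeff_def normalized_entry_def
        distrib_left mult_ac)
qed

lemma xi_sum_upper_tail:
  assumes "\<theta> \<ge> 1" "N \<ge> 3" and w: "\<And>k. k \<in> {3..N} \<Longrightarrow> \<bar>w k\<bar> \<le> 1" "(\<Sum>k\<in>{3..N}. (w k)\<^sup>2) \<le> S"
    and l: "0 < l" "l \<le> sqrt (real N) / (2 * \<alpha>)"
  shows "prob {x \<in> space M. xi_sum \<theta> N w (\<lambda>i. a i x) (\<lambda>i. b i x) \<ge> t}
    \<le> exp (- l * t + l\<^sup>2 * (4 * \<alpha> * S / real N))"
proof -
  define I where "I = {3..N} <+> {2..N-1}"
  define c where "c = xi_sum_coeff \<theta> N w"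
  have I: "finite I" "I \<subseteq> {1..N} <+> {1..N-1}"
    by (auto simp: I_def)
  have mgf: "(\<integral>\<^sup>+x. ennreal (exp (l * (c j * normalized_entry j x))) \<partial>M) \<le> ennreal (exp (l\<^sup>2 * (2 * \<alpha> * (c j)\<^sup>2)))"
    if "j \<in> I" for j
  proof -
    have "l * \<bar>c j\<bar> * \<alpha> \<le> (sqrt (real N) / (2 * \<alpha>)) * (1 / sqrt (real N)) * \<alpha>"
      using xi_sum_coeff_abs_le[OF \<open>\<theta> \<ge> 1\<close> _ w(1)] that l alpha_pos
      by (intro mult_right_mono mult_mono) (auto simp: c_def I_def)
    then have "\<bar>l * c j\<bar> * \<alpha> \<le> 1/2"
      using l alpha_pos \<open>N \<ge> 3\<close> by (simp add: abs_mult)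
    then show ?thesis
      using normalized_entry_mgf_le[of j "l * c j"] that I by (auto simp: mult_ac power_mult_distrib)
  qed
  have "(\<Sum>j\<in>I. 2 * \<alpha> * (c j)\<^sup>2) = 2 * \<alpha> * (\<Sum>j\<in>I. (c j)\<^sup>2)"
    by (simp add: sum_distrib_left)
  also have "\<dots> \<le> 2 * \<alpha> * (2 * (\<Sum>k\<in>{3..N}. (w k)\<^sup>2) / real N)"
    using xi_sum_coeff_sq_sum_le[OF \<open>\<theta> \<ge> 1\<close> \<open>N \<ge> 3\<close>, of w] alpha_pos
    by (intro mult_left_mono) (auto simp: I_def c_def)
  also have "\<dots> \<le> 4 * \<alpha> * S / real N"
    using w(2) alpha_pos by (simp add: divide_right_mono)
  finally have v: "(\<Sum>j\<in>I. 2 * \<alpha> * (c j)\<^sup>2) \<le> 4 * \<alpha> * S / real N" .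
  have "prob {x \<in> space M. xi_sum \<theta> N w (\<lambda>i. a i x) (\<lambda>i. b i x) \<ge> t}
      = prob {x \<in> space M. (\<Sum>j\<in>I. c j * normalized_entry j x) \<ge> t}"
    using \<open>N \<ge> 3\<close> by (simp add: xi_sum_eq_sum_normalized_entry I_def c_def)
  also have "\<dots> \<le> exp (- l * t + l\<^sup>2 * (\<Sum>j\<in>I. 2 * \<alpha> * (c j)\<^sup>2))"
  proof (rule indep_sum_Chernoff_bound[OF I(1) _ l(1) mgf])
    show "indep_vars (\<lambda>_. borel) (\<lambda>j x. c j * normalized_entry j x) I"
      using indep_vars_subset[OF indep_normalized_entry I(2)] by (rule indep_vars_compose2) simp
  qed
  also have "\<dots> \<le> exp (- l * t + l\<^sup>2 * (4 * \<alpha> * S / real N))"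
    using mult_left_mono[OF v, of "l\<^sup>2"] by simp
  finally show ?thesis .
qed

lemma xi_sum_measurable [measurable]:
  assumes "N \<ge> 3"
  shows "(\<lambda>x. xi_sum \<theta> N w (\<lambda>i. a i x) (\<lambda>i. b i x)) \<in> borel_measurable M"
proof -
  have "normalized_entry j \<in> borel_measurable M" if "j \<in> {3..N} <+> {2..N-1}" for j
    using that by (intro normalized_entry_measurable) auto
  then show ?thesis
    unfolding xi_sum_eq_sum_normalized_entry[OF assms] by measurable
qed

definition xi_sum_exceeds :: "real \<Rightarrow> (nat \<Rightarrow> real) \<Rightarrow> real \<Rightarrow> 's set" where
  "xi_sum_exceeds \<theta> w t = {x \<in> space M. t \<le> \<bar>xi_sum \<theta> N w (\<lambda>i. a i x) (\<lambda>i. b i x)\<bar>}"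

lemma xi_sum_exceeds_sets [measurable]: "N \<ge> 3 \<Longrightarrow> xi_sum_exceeds \<theta> w t \<in> sets M"
  unfolding xi_sum_exceeds_def by measurable

lemma xi_sum_abs_tail:
  assumes "\<theta> \<ge> 1" "N \<ge> 3" "\<And>k. k \<in> {3..N} \<Longrightarrow> \<bar>w k\<bar> \<le> 1" "(\<Sum>k\<in>{3..N}. (w k)\<^sup>2) \<le> S"
    and "S > 0" "t > 0"
  shows "prob (xi_sum_exceeds \<theta> w t) \<le> xi_tail \<alpha> N S t"
  unfolding xi_sum_exceeds_def xi_tail_def
proof (rule abs_tail_le_subexp_tail)
  fix l assume "0 < l" "l \<le> sqrt (real N) / (2 * \<alpha>)"
  show "prob {x \<in> space M. xi_sum \<theta> N w (\<lambda>i. a i x) (\<lambda>i. b i x) \<ge> t}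
      \<le> exp (- l * t + l\<^sup>2 * (4 * \<alpha> * S / real N))"
    by (rule xi_sum_upper_tail) (use assms \<open>0 < l\<close> \<open>l \<le> _\<close> in auto)
  show "prob {x \<in> space M. - xi_sum \<theta> N w (\<lambda>i. a i x) (\<lambda>i. b i x) \<ge> t}
      \<le> exp (- l * t + l\<^sup>2 * (4 * \<alpha> * S / real N))"
    using xi_sum_upper_tail[of \<theta> "\<lambda>k. - w k" S l t] assms \<open>0 < l\<close> \<open>l \<le> _\<close>
    by (simp add: xi_sum_uminus)
qed (use assms alpha_pos in auto)

lemma LL_weight_tail:
  assumes "\<theta> \<ge> 1" "3 \<le> i" "i \<le> N" "t > 0"
  shows "prob (xi_sum_exceeds \<theta> (LL_weight \<theta> N i) t) \<le> xi_tail \<alpha> N (1 / dd \<theta> N i) t"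
  using LL_weight_bounds[OF assms(1,3)] dd_bounds[OF assms(1), of i N] assms
  by (intro xi_sum_abs_tail LL_weight_sq_sum_le) auto

lemma LL_weight_diff_tail:
  assumes "\<theta> \<ge> 1" "3 \<le> i" "i \<le> s" "s \<le> N" "s - i \<le> h" "h > 0" "t > 0"
  shows "prob (xi_sum_exceeds \<theta> (\<lambda>k. LL_weight \<theta> N s k - LL_weight \<theta> N i k) t) \<le> xi_tail \<alpha> N (3 * real h) t"
proof (rule xi_sum_abs_tail)
  show "\<bar>LL_weight \<theta> N s k - LL_weight \<theta> N i k\<bar> \<le> 1" for k
    using LL_weight_bounds[OF assms(1), of s N k] LL_weight_bounds[OF assms(1), of i N k] assms by auto
  show "(\<Sum>k\<in>{3..N}. (LL_weight \<theta> N s k - LL_weight \<theta> N i k)\<^sup>2) \<le> 3 * real h"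
    using LL_weight_diff_sq_sum_le[OF assms(1-4)] assms(5) by linarith
qed (use assms in auto)

lemma LL_measurable:
  assumes "N \<ge> 3" "i \<le> N"
  shows "(\<lambda>x. LL \<theta> N (\<lambda>i. a i x) (\<lambda>i. b i x) i) \<in> borel_measurable M"
  using xi_sum_measurable[OF assms(1)] by (simp add: LL_eq_xi_sum[OF assms(2)])

lemma LL_bulk_union_tail:
  assumes "\<theta> \<ge> 1" "N \<ge> 3" "t > 0" "\<eta> > 0"
  shows "prob (\<Union>i\<in>{i \<in> {3..N}. \<eta> \<le> dd \<theta> N i}. xi_sum_exceeds \<theta> (LL_weight \<theta> N i) t)
    \<le> real N * xi_tail \<alpha> N (1 / \<eta>) t"
proof (rule measure_UN_le_card_mult)
  fix i assume "i \<in> {i \<in> {3..N}. \<eta> \<le> dd \<theta> N i}"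
  then have i: "3 \<le> i" "i \<le> N" "\<eta> \<le> dd \<theta> N i"
    by auto
  have "prob (xi_sum_exceeds \<theta> (LL_weight \<theta> N i) t) \<le> xi_tail \<alpha> N (1 / dd \<theta> N i) t"
    by (rule LL_weight_tail[OF assms(1) i(1,2) assms(3)])
  also have "\<dots> \<le> xi_tail \<alpha> N (1 / \<eta>) t"
    using i \<open>\<eta> > 0\<close> alpha_pos by (intro xi_tail_mono divide_left_mono) auto
  finally show "prob (xi_sum_exceeds \<theta> (LL_weight \<theta> N i) t) \<le> xi_tail \<alpha> N (1 / \<eta>) t" .
next
  have "card {i \<in> {3..N}. \<eta> \<le> dd \<theta> N i} \<le> card {3..N}"
    by (rule card_mono) auto
  then show "real (card {i \<in> {3..N}. \<eta> \<le> dd \<theta> N i}) \<le> real N"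
    by simp
qed (use assms in \<open>auto simp: xi_tail_nonneg\<close>)

lemma LL_edge_grid_union_tail:
  assumes "\<theta> \<ge> 1" "N \<ge> 3" "t > 0" "h \<ge> 1"
  shows "prob (\<Union>s\<in>grid_up N h ` {i \<in> {3..N}. dd \<theta> N i < \<eta>}. xi_sum_exceeds \<theta> (LL_weight \<theta> N s) t)
    \<le> (real N * \<theta>\<^sup>2 * \<eta>\<^sup>2 / real h + 1) * xi_tail \<alpha> N (1 / dd \<theta> N N) t"
proof (rule measure_UN_le_card_mult)
  fix s assume "s \<in> grid_up N h ` {i \<in> {3..N}. dd \<theta> N i < \<eta>}"
  then have s: "3 \<le> s" "s \<le> N"
    using grid_up_bounds[OF \<open>h \<ge> 1\<close>] by force+
  have "prob (xi_sum_exceeds \<theta> (LL_weight \<theta> N s) t) \<le> xi_tail \<alpha> N (1 / dd \<theta> N s) t"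
    by (rule LL_weight_tail[OF assms(1) s assms(3)])
  also have "\<dots> \<le> xi_tail \<alpha> N (1 / dd \<theta> N N) t"
    using s dd_bounds[OF assms(1), of s N] dd_bounds[OF assms(1), of N N] dd_antimono[of s N \<theta> N] alpha_pos
    by (intro xi_tail_mono divide_left_mono) auto
  finally show "prob (xi_sum_exceeds \<theta> (LL_weight \<theta> N s) t) \<le> xi_tail \<alpha> N (1 / dd \<theta> N N) t" .
next
  show "real (card (grid_up N h ` {i \<in> {3..N}. dd \<theta> N i < \<eta>})) \<le> real N * \<theta>\<^sup>2 * \<eta>\<^sup>2 / real h + 1"
    using N_minus_lt_of_dd_lt[OF assms(1)] \<open>h \<ge> 1\<close> by (intro card_grid_up_image_le) auto
qed (use assms in \<open>auto simp: xi_tail_nonneg\<close>)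

lemma LL_edge_increment_union_tail:
  assumes "\<theta> \<ge> 1" "N \<ge> 3" "t > 0" "h \<ge> 1"
  shows "prob (\<Union>i\<in>{i \<in> {3..N}. dd \<theta> N i < \<eta>}.
      xi_sum_exceeds \<theta> (\<lambda>k. LL_weight \<theta> N (grid_up N h i) k - LL_weight \<theta> N i k) t)
    \<le> real N * xi_tail \<alpha> N (3 * real h) t"
proof (rule measure_UN_le_card_mult)
  fix i assume "i \<in> {i \<in> {3..N}. dd \<theta> N i < \<eta>}"
  then show "prob (xi_sum_exceeds \<theta> (\<lambda>k. LL_weight \<theta> N (grid_up N h i) k - LL_weight \<theta> N i k) t)
      \<le> xi_tail \<alpha> N (3 * real h) t"
    using grid_up_bounds[OF \<open>h \<ge> 1\<close>, of i N] assms
    by (intro LL_weight_diff_tail) auto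
next
  have "card {i \<in> {3..N}. dd \<theta> N i < \<eta>} \<le> card {3..N}"
    by (rule card_mono) auto
  then show "real (card {i \<in> {3..N}. dd \<theta> N i < \<eta>}) \<le> real N"
    by simp
qed (use assms in \<open>auto simp: xi_tail_nonneg\<close>)

lemma LL_exceeds_subset:
  assumes "t > 0"
  shows "{x \<in> space M. \<exists>i\<in>{3..N}. 2 * t < \<bar>LL \<theta> N (\<lambda>i. a i x) (\<lambda>i. b i x) i\<bar>}
    \<subseteq> (\<Union>i\<in>{i \<in> {3..N}. \<eta> \<le> dd \<theta> N i}. xi_sum_exceeds \<theta> (LL_weight \<theta> N i) t)
      \<union> (\<Union>s\<in>grid_up N h ` {i \<in> {3..N}. dd \<theta> N i < \<eta>}. xi_sum_exceeds \<theta> (LL_weight \<theta> N s) t)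
      \<union> (\<Union>i\<in>{i \<in> {3..N}. dd \<theta> N i < \<eta>}.
           xi_sum_exceeds \<theta> (\<lambda>k. LL_weight \<theta> N (grid_up N h i) k - LL_weight \<theta> N i k) t)"
    (is "_ \<subseteq> ?U")
proof
  fix x assume "x \<in> {x \<in> space M. \<exists>i\<in>{3..N}. 2 * t < \<bar>LL \<theta> N (\<lambda>i. a i x) (\<lambda>i. b i x) i\<bar>}"
  then obtain i where x: "x \<in> space M" and i: "i \<in> {3..N}"
    and "2 * t < \<bar>LL \<theta> N (\<lambda>i. a i x) (\<lambda>i. b i x) i\<bar>"
    by blast
  then have big: "2 * t < \<bar>xi_sum \<theta> N (LL_weight \<theta> N i) (\<lambda>i. a i x) (\<lambda>i. b i x)\<bar>"
    by (simp add: LL_eq_xi_sum)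
  show "x \<in> ?U"
  proof (cases "\<eta> \<le> dd \<theta> N i")
    case True
    have "x \<in> xi_sum_exceeds \<theta> (LL_weight \<theta> N i) t"
      using big x \<open>t > 0\<close> by (simp add: xi_sum_exceeds_def)
    then show ?thesis
      using True i by blast
  next
    case False
    have "t \<le> \<bar>xi_sum \<theta> N (LL_weight \<theta> N (grid_up N h i)) (\<lambda>i. a i x) (\<lambda>i. b i x)\<bar>
        \<or> t \<le> \<bar>xi_sum \<theta> N (\<lambda>k. LL_weight \<theta> N (grid_up N h i) k - LL_weight \<theta> N i k) (\<lambda>i. a i x) (\<lambda>i. b i x)\<bar>"
      using big by (auto simp: xi_sum_diff)
    then show ?thesis
      using False i x by (auto simp: xi_sum_exceeds_def not_le)
  qed
qed

lemma LL_max_tail_le: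
  assumes "\<theta> \<ge> 1" "N \<ge> 3" "t > 0" "\<eta> > 0" "h \<ge> 1"
  shows "prob {x \<in> space M. \<exists>i\<in>{3..N}. 2 * t < \<bar>LL \<theta> N (\<lambda>i. a i x) (\<lambda>i. b i x) i\<bar>}
    \<le> chain_tail_bound \<alpha> \<theta> N t \<eta> h"
proof -
  define E where "E w = xi_sum_exceeds \<theta> w t" for w
  define W where "W = LL_weight \<theta> N"
  define bulk where "bulk = {i \<in> {3..N}. \<eta> \<le> dd \<theta> N i}"
  define edge where "edge = {i \<in> {3..N}. dd \<theta> N i < \<eta>}"
  have "prob {x \<in> space M. \<exists>i\<in>{3..N}. 2 * t < \<bar>LL \<theta> N (\<lambda>i. a i x) (\<lambda>i. b i x) i\<bar>}
      \<le> prob ((\<Union>i\<in>bulk. E (W i)) \<union> (\<Union>s\<in>grid_up N h ` edge. E (W s))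
          \<union> (\<Union>i\<in>edge. E (\<lambda>k. W (grid_up N h i) k - W i k)))"
    using LL_exceeds_subset[OF \<open>t > 0\<close>] \<open>N \<ge> 3\<close>
    by (intro finite_measure_mono) (auto simp: E_def W_def bulk_def edge_def)
  also have "\<dots> \<le> prob (\<Union>i\<in>bulk. E (W i)) + prob (\<Union>s\<in>grid_up N h ` edge. E (W s))
      + prob (\<Union>i\<in>edge. E (\<lambda>k. W (grid_up N h i) k - W i k))"
    using \<open>N \<ge> 3\<close>
    by (intro order.trans[OF measure_Un_le add_right_mono[OF measure_Un_le]])
       (auto simp: E_def bulk_def edge_def)
  also have "\<dots> \<le> chain_tail_bound \<alpha> \<theta> N t \<eta> h"
    using LL_bulk_union_tail[OF assms(1-4)] LL_edge_grid_union_tail[OF assms(1-3,5), of \<eta>]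
      LL_edge_increment_union_tail[OF assms(1-3,5), of \<eta>]
    unfolding chain_tail_bound_def E_def W_def bulk_def edge_def by (intro add_mono)
  finally show ?thesis .
qed

end

section \<open>Asymptotics\<close>

lemma o_P_Max_absI:
  assumes "finite_measure M" and fin: "\<And>N. finite (I N)"
    and ev: "eventually (\<lambda>N. I N \<noteq> {} \<and> c N > 0 \<and> (\<forall>i\<in>I N. Y N i \<in> borel_measurable M)) sequentially"
    and lim: "\<And>\<epsilon>. \<epsilon> > 0 \<Longrightarrow> (\<lambda>N. measure M {x \<in> space M. \<exists>i\<in>I N. \<epsilon> * c N < \<bar>Y N i x\<bar>}) \<longlonglongrightarrow> 0"
  shows "o_P M (\<lambda>N x. MAX i\<in>I N. \<bar>Y N i x\<bar>) c"
  unfolding o_P_def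
proof (intro allI impI)
  interpret finite_measure M by (rule assms(1))
  fix \<epsilon> :: real assume "\<epsilon> > 0"
  have "eventually (\<lambda>N. measure M {x \<in> space M. \<bar>(MAX i\<in>I N. \<bar>Y N i x\<bar>) / c N\<bar> > \<epsilon>}
      \<le> measure M {x \<in> space M. \<exists>i\<in>I N. \<epsilon> * c N < \<bar>Y N i x\<bar>}) sequentially"
    using ev
  proof eventually_elim
    case (elim N)
    then have [measurable]: "i \<in> I N \<Longrightarrow> Y N i \<in> borel_measurable M" for i
      by blast
    have "{x \<in> space M. \<bar>(MAX i\<in>I N. \<bar>Y N i x\<bar>) / c N\<bar> > \<epsilon>} \<subseteq> {x \<in> space M. \<exists>i\<in>I N. \<epsilon> * c N < \<bar>Y N i x\<bar>}"
    proof safe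
      fix x assume "x \<in> space M" "\<epsilon> < \<bar>(MAX i\<in>I N. \<bar>Y N i x\<bar>) / c N\<bar>"
      moreover have "0 \<le> (MAX i\<in>I N. \<bar>Y N i x\<bar>)"
        using elim fin[of N] by (auto simp: Max_ge_iff)
      ultimately have "\<epsilon> * c N < (MAX i\<in>I N. \<bar>Y N i x\<bar>)"
        using elim by (simp add: pos_less_divide_eq)
      then show "\<exists>i\<in>I N. \<epsilon> * c N < \<bar>Y N i x\<bar>"
        using elim fin[of N] by (simp add: Max_gr_iff)
    qed
    moreover have "{x \<in> space M. \<exists>i\<in>I N. \<epsilon> * c N < \<bar>Y N i x\<bar>} \<in> sets M"
      using fin[of N] by measurable
    ultimately show ?case
      by (rule finite_measure_mono)
  qed
  then show "(\<lambda>N. measure M {x \<in> space M. \<bar>(MAX i\<in>I N. \<bar>Y N i x\<bar>) / c N\<bar> > \<epsilon>}) \<longlonglongrightarrow> 0"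
    by (intro tendsto_sandwich[OF _ _ tendsto_const lim[OF \<open>\<epsilon> > 0\<close>]]) auto
qed

lemma powr_ln_mult_exp_neg_sqrt_tendsto_zero:
  fixes w :: "nat \<Rightarrow> real"
  assumes "\<And>N. w N > 0" and lim: "(\<lambda>N. (ln (ln (real N)))\<^sup>2 / w N) \<longlonglongrightarrow> 0" and "c > 0"
  shows "(\<lambda>N. (ln (real N)) ^ k * exp (- c * sqrt (w N))) \<longlonglongrightarrow> 0"
proof (rule tendsto_sandwich[of "\<lambda>_. 0" _ _ "\<lambda>N. 1 / ln (real N)"])
  have "eventually (\<lambda>N. (ln (ln (real N)))\<^sup>2 / w N < (c / (k + 1))\<^sup>2) sequentially"
    using lim \<open>c > 0\<close> by (intro order_tendstoD(2)) auto
  moreover have "eventually (\<lambda>N. 1 \<le> ln (real N)) sequentially"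
    by real_asymp
  ultimately show "eventually (\<lambda>N. (ln (real N)) ^ k * exp (- c * sqrt (w N)) \<le> 1 / ln (real N)) sequentially"
  proof eventually_elim
    case (elim N)
    define L where "L = ln (real N)"
    have "L \<ge> 1" "0 \<le> ln L"
      using elim by (simp_all add: L_def)
    have "(ln L)\<^sup>2 < (c / (k + 1))\<^sup>2 * w N"
      using elim assms(1)[of N] by (simp add: L_def divide_less_eq)
    then have "sqrt ((ln L)\<^sup>2) < sqrt ((c / (k + 1))\<^sup>2 * w N)"
      by (rule real_sqrt_less_mono)
    then have "ln L < c / (k + 1) * sqrt (w N)"
      using \<open>0 \<le> ln L\<close> \<open>c > 0\<close> by (simp add: real_sqrt_mult)
    then have "(k + 1) * ln L < (k + 1) * (c / (k + 1) * sqrt (w N))"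
      by (intro mult_strict_left_mono) auto
    then have "(k + 1) * ln L \<le> c * sqrt (w N)"
      by simp
    then have "exp (- c * sqrt (w N)) \<le> exp (- ((k + 1) * ln L))"
      by simp
    also have "\<dots> = 1 / L ^ (k + 1)"
      using exp_of_nat_mult[of "k + 1" "ln L"] \<open>L \<ge> 1\<close> by (simp add: exp_minus inverse_eq_divide)
    finally have "L ^ k * exp (- c * sqrt (w N)) \<le> L ^ k * (1 / L ^ (k + 1))"
      using \<open>L \<ge> 1\<close> by (intro mult_left_mono) auto
    then show ?case
      using \<open>L \<ge> 1\<close> by (simp add: L_def)
  qed
next
  show "eventually (\<lambda>N. 0 \<le> (ln (real N)) ^ k * exp (- c * sqrt (w N))) sequentially"
    using eventually_ge_at_top[of "1::nat"] by eventually_elim simp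
qed (simp, real_asymp)

lemma theta_eventually:
  fixes w :: "nat \<Rightarrow> real"
  assumes w: "\<And>N. w N > 0" and lim: "(\<lambda>N. w N / (ln (real N))\<^sup>2) \<longlonglongrightarrow> 0"
  shows "eventually (\<lambda>N. 1 \<le> theta w N \<and> theta w N \<le> 2
    \<and> sqrt (w N / 2) \<le> real N powr (1/3) * dd (theta w N) N N) sequentially"
proof -
  have "eventually (\<lambda>N. w N / (ln (real N))\<^sup>2 < 1) sequentially"
    using lim by (intro order_tendstoD(2)) auto
  moreover have "eventually (\<lambda>N. 0 < ln (real N)) sequentially"
    by real_asymp
  moreover have "eventually (\<lambda>N. (ln (real N))\<^sup>2 \<le> real N powr (2/3)) sequentially"
    by real_asymp
  moreover have "eventually (\<lambda>N. N \<ge> 1) sequentially"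
    by (rule eventually_ge_at_top)
  ultimately show ?thesis
  proof eventually_elim
    case (elim N)
    define v where "v = real N powr (-2/3) * w N"
    have "w N \<le> real N powr (2/3)"
      using elim by (simp add: divide_less_eq)
    then have "0 < v" "v \<le> 1"
      using w[of N] elim by (simp_all add: v_def powr_minus divide_le_eq field_simps)
    have "(real N powr (1/3))\<^sup>2 = real N powr (2/3)"
      using elim powr_power[of "real N" "1/3" 2] by simp
    then have "(real N powr (1/3))\<^sup>2 * v = (real N powr (2/3) * real N powr (-2/3)) * w N"
      by (simp add: v_def)
    also have "\<dots> = w N"
      using elim by (simp flip: powr_add)
    finally have "sqrt (w N / 2) = sqrt ((real N powr (1/3))\<^sup>2 * (v / 2))"
      by simp
    also have "\<dots> = real N powr (1/3) * sqrt (v / 2)"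
      by (simp only: real_sqrt_mult real_sqrt_abs abs_of_nonneg powr_ge_zero)
    also have "\<dots> \<le> real N powr (1/3) * dd (theta w N) N N"
      using dd_last_ge[OF \<open>0 < v\<close> \<open>v \<le> 1\<close>, of N] elim by (simp add: theta_def v_def mult_left_mono)
    finally show ?case
      using \<open>0 < v\<close> \<open>v \<le> 1\<close> by (simp add: theta_def v_def)
  qed
qed

lemma nat_floor_bounds:
  fixes x :: real
  assumes "x \<ge> 2"
  shows "x / 2 \<le> real (nat \<lfloor>x\<rfloor>)" "real (nat \<lfloor>x\<rfloor>) \<le> x" "1 \<le> nat \<lfloor>x\<rfloor>"
  using assms by linarith+

lemma edge_grid_count_le:
  fixes m L \<theta> :: real and h :: nat
  assumes "m > 0" "L > 0" "m ^ 3 = real N" "\<theta>\<^sup>2 \<le> 4" "m / L ^ 4 / 2 \<le> real h"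
  shows "real N * \<theta>\<^sup>2 * (L\<^sup>2 / m)\<^sup>2 / real h \<le> 8 * L ^ 8"
proof -
  have "real N * \<theta>\<^sup>2 * (L\<^sup>2 / m)\<^sup>2 = m * \<theta>\<^sup>2 * L ^ 4"
    using \<open>m > 0\<close> by (simp add: \<open>m ^ 3 = real N\<close>[symmetric] power2_eq_square eval_nat_numeral field_simps)
  also have "\<dots> \<le> m * 4 * L ^ 4"
    using assms by (intro mult_right_mono mult_left_mono) auto
  finally have "real N * \<theta>\<^sup>2 * (L\<^sup>2 / m)\<^sup>2 / real h \<le> m * 4 * L ^ 4 / (m / L ^ 4 / 2)"
    using assms by (intro frac_le) auto
  also have "\<dots> = 8 * L ^ 8"
    using assms by (simp add: field_simps)
  finally show ?thesis .
qed

lemma xi_tail_edge_le: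
  fixes \<alpha> \<epsilon> m d v :: real
  assumes "\<alpha> > 0" "m > 0" "m ^ 3 = real N" "d > 0" "sqrt (v / 2) \<le> m * d"
  shows "xi_tail \<alpha> N (1 / d) (\<epsilon> / (2 * m))
    \<le> 2 * exp (- (\<epsilon>\<^sup>2 / (64 * \<alpha> * sqrt 2)) * sqrt v) + 2 * exp (- (\<epsilon> / (2 * m)) * (sqrt (real N) / (2 * \<alpha>)) / 2)"
proof -
  have "(\<epsilon> / (2 * m))\<^sup>2 * real N = \<epsilon>\<^sup>2 * m / 4"
    using \<open>m > 0\<close> by (simp add: \<open>m ^ 3 = real N\<close>[symmetric] power2_eq_square eval_nat_numeral)
  moreover have "real N = m * m * m" "real N > 0"
    using \<open>m > 0\<close> by (simp_all flip: \<open>m ^ 3 = real N\<close> add: power3_eq_cube)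
  ultimately have exponent: "\<epsilon>\<^sup>2 / (64 * \<alpha>) * (m * d) = (\<epsilon> / (2 * m))\<^sup>2 / (4 * (4 * \<alpha> * (1 / d) / real N))"
    using assms by (simp add: field_simps power2_eq_square)
  have "\<epsilon>\<^sup>2 / (64 * \<alpha> * sqrt 2) * sqrt v = \<epsilon>\<^sup>2 / (64 * \<alpha>) * sqrt (v / 2)"
    by (simp add: real_sqrt_divide)
  also have "\<dots> \<le> \<epsilon>\<^sup>2 / (64 * \<alpha>) * (m * d)"
    using assms by (intro mult_left_mono) auto
  finally show ?thesis
    unfolding exponent by (simp add: xi_tail_def subexp_tail_def)
qed

definition chain_tail_majorant :: "real \<Rightarrow> real \<Rightarrow> (nat \<Rightarrow> real) \<Rightarrow> nat \<Rightarrow> real" where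
  "chain_tail_majorant \<alpha> \<epsilon> w N =
     real N * xi_tail \<alpha> N (1 / ((ln (real N))\<^sup>2 / real N powr (1/3))) (\<epsilon> / (2 * real N powr (1/3)))
     + (8 * ln (real N) ^ 8 + 1) * (2 * exp (- (\<epsilon>\<^sup>2 / (64 * \<alpha> * sqrt 2)) * sqrt (w N))
         + 2 * exp (- (\<epsilon> / (2 * real N powr (1/3))) * (sqrt (real N) / (2 * \<alpha>)) / 2))
     + real N * xi_tail \<alpha> N (3 * (real N powr (1/3) / ln (real N) ^ 4)) (\<epsilon> / (2 * real N powr (1/3)))"

lemma chain_tail_majorant_tendsto_zero:
  fixes w :: "nat \<Rightarrow> real"
  assumes "\<alpha> > 0" "\<epsilon> > 0" and w: "\<And>N. w N > 0" and lim: "(\<lambda>N. (ln (ln (real N)))\<^sup>2 / w N) \<longlonglongrightarrow> 0"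
  shows "chain_tail_majorant \<alpha> \<epsilon> w \<longlonglongrightarrow> 0"
proof -
  define c where "c = \<epsilon>\<^sup>2 / (64 * \<alpha> * sqrt 2)"
  have "c > 0"
    using assms by (simp add: c_def)
  have "(\<lambda>N. 16 * (ln (real N) ^ 8 * exp (- c * sqrt (w N))) + 2 * (ln (real N) ^ 0 * exp (- c * sqrt (w N))))
      \<longlonglongrightarrow> 16 * 0 + 2 * 0"
    by (intro tendsto_intros powr_ln_mult_exp_neg_sqrt_tendsto_zero[OF w lim \<open>c > 0\<close>])
  then have "(\<lambda>N. (8 * ln (real N) ^ 8 + 1) * (2 * exp (- c * sqrt (w N)))) \<longlonglongrightarrow> 0"
    by (simp add: algebra_simps)
  moreover have "(\<lambda>N. real N * xi_tail \<alpha> N (1 / ((ln (real N))\<^sup>2 / real N powr (1/3))) (\<epsilon> / (2 * real N powr (1/3))))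
      \<longlonglongrightarrow> 0"
    using assms unfolding xi_tail_def subexp_tail_def by real_asymp
  moreover have "(\<lambda>N. (8 * ln (real N) ^ 8 + 1)
      * (2 * exp (- (\<epsilon> / (2 * real N powr (1/3))) * (sqrt (real N) / (2 * \<alpha>)) / 2))) \<longlonglongrightarrow> 0"
    using assms by real_asymp
  moreover have "(\<lambda>N. real N * xi_tail \<alpha> N (3 * (real N powr (1/3) / ln (real N) ^ 4)) (\<epsilon> / (2 * real N powr (1/3))))
      \<longlonglongrightarrow> 0"
    using assms unfolding xi_tail_def subexp_tail_def by real_asymp
  ultimately show ?thesis
    unfolding chain_tail_majorant_def c_def[symmetric] distrib_left by (intro tendsto_add_zero)
qed

lemma chain_tail_bound_le_majorant:
  fixes w :: "nat \<Rightarrow> real"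
  assumes "\<alpha> > 0" and w: "\<And>N. w N > 0" and lim: "(\<lambda>N. w N / (ln (real N))\<^sup>2) \<longlonglongrightarrow> 0"
  shows "eventually (\<lambda>N. chain_tail_bound \<alpha> (theta w N) N (\<epsilon> * real N powr (-1/3) / 2)
      ((ln (real N))\<^sup>2 / real N powr (1/3)) (nat \<lfloor>real N powr (1/3) / (ln (real N))^4\<rfloor>)
    \<le> chain_tail_majorant \<alpha> \<epsilon> w N) sequentially"
proof -
  have "eventually (\<lambda>N. 2 \<le> real N powr (1/3) / ln (real N) ^ 4) sequentially"
    by real_asymp
  then show ?thesis
    using eventually_ge_at_top[of 3] theta_eventually[OF w lim]
  proof eventually_elim
    case (elim N)
    define m where "m = real N powr (1/3)"
    define L where "L = ln (real N)"
    define h where "h = nat \<lfloor>m / L ^ 4\<rfloor>"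
    have "m > 0" "L > 0" "m ^ 3 = real N"
      using elim powr_power[of "real N" "1/3" 3] by (simp_all add: m_def L_def)
    have "\<epsilon> * real N powr (-1/3) / 2 = \<epsilon> / (2 * m)"
      using powr_minus_divide[of "real N" "1/3"] by (simp add: m_def)
    have h: "m / L ^ 4 / 2 \<le> real h" "real h \<le> m / L ^ 4" "h \<ge> 1"
      using nat_floor_bounds[of "m / L ^ 4"] elim by (simp_all add: h_def m_def L_def)
    have count: "real N * (theta w N)\<^sup>2 * (L\<^sup>2 / m)\<^sup>2 / real h \<le> 8 * L ^ 8"
      using \<open>m > 0\<close> \<open>L > 0\<close> \<open>m ^ 3 = real N\<close> power_mono[of "theta w N" 2 2] elim h(1)
      by (intro edge_grid_count_le) auto
    have edge: "xi_tail \<alpha> N (1 / dd (theta w N) N N) (\<epsilon> / (2 * m))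
        \<le> 2 * exp (- (\<epsilon>\<^sup>2 / (64 * \<alpha> * sqrt 2)) * sqrt (w N)) + 2 * exp (- (\<epsilon> / (2 * m)) * (sqrt (real N) / (2 * \<alpha>)) / 2)"
      using xi_tail_edge_le[OF \<open>\<alpha> > 0\<close> \<open>m > 0\<close> \<open>m ^ 3 = real N\<close>, of "dd (theta w N) N N" "w N" \<epsilon>]
        dd_bounds[of "theta w N" N N] elim by (simp add: m_def)
    have "3 * real h \<le> 3 * (m / L ^ 4)"
      using h(2) by linarith
    then have increment: "xi_tail \<alpha> N (3 * real h) (\<epsilon> / (2 * m)) \<le> xi_tail \<alpha> N (3 * (m / L ^ 4)) (\<epsilon> / (2 * m))"
      using h(3) elim \<open>\<alpha> > 0\<close> by (intro xi_tail_mono) auto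
    show ?case
      unfolding chain_tail_bound_def chain_tail_majorant_def \<open>\<epsilon> * real N powr (-1/3) / 2 = \<epsilon> / (2 * m)\<close>
        m_def[symmetric] L_def[symmetric] h_def[symmetric]
      using count edge increment
      by (intro add_mono mult_mono mult_left_mono) (auto simp: xi_tail_nonneg)
  qed
qed

lemma LL_exceeds_prob_tendsto_zero:
  fixes w :: "nat \<Rightarrow> real"
  assumes model: "\<And>N. tridiagonal_model M \<alpha> N (a N) (b N)" and "\<epsilon> > 0" and w: "\<And>N. w N > 0"
    and lim1: "(\<lambda>N. (ln (ln (real N)))\<^sup>2 / w N) \<longlonglongrightarrow> 0"
    and lim2: "(\<lambda>N. w N / (ln (real N))\<^sup>2) \<longlonglongrightarrow> 0"
  shows "(\<lambda>N. measure M {x \<in> space M. \<exists>i\<in>{3..N}.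
    \<epsilon> * real N powr (-1/3) < \<bar>LL (theta w N) N (\<lambda>i. a N i x) (\<lambda>i. b N i x) i\<bar>}) \<longlonglongrightarrow> 0"
proof (rule tendsto_sandwich[OF _ _ tendsto_const])
  have "\<alpha> > 0"
    using tridiagonal_model.alpha_pos[OF model] .
  have "eventually (\<lambda>N. 2 \<le> real N powr (1/3) / (ln (real N))^4) sequentially"
    by real_asymp
  then show "eventually (\<lambda>N. measure M {x \<in> space M. \<exists>i\<in>{3..N}.
      \<epsilon> * real N powr (-1/3) < \<bar>LL (theta w N) N (\<lambda>i. a N i x) (\<lambda>i. b N i x) i\<bar>}
    \<le> chain_tail_majorant \<alpha> \<epsilon> w N) sequentially"
    using eventually_ge_at_top[of 3] theta_eventually[OF w lim2] chain_tail_bound_le_majorant[OF \<open>\<alpha> > 0\<close> w lim2, where \<epsilon> = \<epsilon>]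
  proof eventually_elim
    case (elim N)
    have "measure M {x \<in> space M. \<exists>i\<in>{3..N}.
        \<epsilon> * real N powr (-1/3) < \<bar>LL (theta w N) N (\<lambda>i. a N i x) (\<lambda>i. b N i x) i\<bar>}
      \<le> chain_tail_bound \<alpha> (theta w N) N (\<epsilon> * real N powr (-1/3) / 2) ((ln (real N))\<^sup>2 / real N powr (1/3))
           (nat \<lfloor>real N powr (1/3) / (ln (real N))^4\<rfloor>)"
      using tridiagonal_model.LL_max_tail_le[OF model, of "theta w N" N "\<epsilon> * real N powr (-1/3) / 2"]
        nat_floor_bounds(3) elim \<open>\<epsilon> > 0\<close> by simp
    then show ?case
      using elim by linarith
  qed
  show "chain_tail_majorant \<alpha> \<epsilon> w \<longlonglongrightarrow> 0"
    by (rule chain_tail_majorant_tendsto_zero[OF \<open>\<alpha> > 0\<close> \<open>\<epsilon> > 0\<close> w lim1])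
qed simp

theorem lemma6:
  fixes M :: "'s measure" and \<alpha> :: real
    and a b :: "nat \<Rightarrow> nat \<Rightarrow> 's \<Rightarrow> real" and w :: "nat \<Rightarrow> real"
  assumes "prob_space M"
    and "\<alpha> > 0"
    and indep: "\<And>N. prob_space.indep_vars M (\<lambda>_. borel)
            (\<lambda>j. case j of Inl i \<Rightarrow> a N i | Inr i \<Rightarrow> b N i)
            (Inl ` {1..N} \<union> Inr ` {1..N-1})"
    and a_distr: "\<And>N i. 1 \<le> i \<Longrightarrow> i \<le> N \<Longrightarrow>
            distributed M lborel (a N i) (\<lambda>x. ennreal (normal_density 0 (sqrt \<alpha>) x))"
    and b_nonneg: "\<And>N i x. 1 \<le> i \<Longrightarrow> i \<le> N - 1 \<Longrightarrow> x \<in> space M \<Longrightarrow> b N i x \<ge> 0"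
    and b_distr: "\<And>N i. 1 \<le> i \<Longrightarrow> i \<le> N - 1 \<Longrightarrow>
            distributed M lborel (\<lambda>x. (2 / \<alpha>) * (b N i x)\<^sup>2)
              (\<lambda>x. ennreal (chi2_density (2 * real i / \<alpha>) x))"
    and "\<And>N. w N > 0"
    and "((\<lambda>N. (ln (ln (real N)))\<^sup>2 / w N) \<longlongrightarrow> 0) sequentially"
    and "((\<lambda>N. w N / (ln (real N))\<^sup>2) \<longlongrightarrow> 0) sequentially"
  shows "o_P M (\<lambda>N x. MAX i\<in>{3..N}. \<bar>LL (theta w N) N (\<lambda>i. a N i x) (\<lambda>i. b N i x) i\<bar>)
             (\<lambda>N. real N powr (-1/3))"
proof (rule o_P_Max_absI)
  have model: "tridiagonal_model M \<alpha> N (a N) (b N)" for N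
    using assms by (simp add: tridiagonal_model_def tridiagonal_model_axioms_def)
  show "eventually (\<lambda>N. {3..N} \<noteq> {} \<and> real N powr (-1/3) > 0
      \<and> (\<forall>i\<in>{3..N}. (\<lambda>x. LL (theta w N) N (\<lambda>i. a N i x) (\<lambda>i. b N i x) i) \<in> borel_measurable M)) sequentially"
    using eventually_ge_at_top[of 3] by eventually_elim (auto intro: tridiagonal_model.LL_measurable[OF model])
  show "(\<lambda>N. measure M {x \<in> space M. \<exists>i\<in>{3..N}.
      \<epsilon> * real N powr (-1/3) < \<bar>LL (theta w N) N (\<lambda>i. a N i x) (\<lambda>i. b N i x) i\<bar>}) \<longlonglongrightarrow> 0"
    if "\<epsilon> > 0" for \<epsilon>
    using LL_exceeds_prob_tendsto_zero[OF model that assms(7-9)] .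
qed (use prob_space.finite_measure[OF assms(1)] in simp_all)

end
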